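(* Let $\mathscr H$ be a complex Hilbert space and $\mathbf{T}=(T_1,\dots,T_d)\in\mathbb{B}(\mathscr H)^d$. Then $$\frac{1}{d}\,w_e(\mathbf{T}^2)\le w_e^2(\mathbf{T}).$$
   Context: $\mathbb{B}(\mathscr H)$ denotes the bounded linear operators on $\mathscr H$. For a $d$-tuple $\mathbf{T}=(T_1,\dots,T_d)\in\mathbb{B}(\mathscr H)^d$, the Euclidean operator radius is $w_e(\mathbf{T})=\sup\{(\sum_{k=1}^d|\langle T_kx,x\rangle|^2)^{1/2}: x\in\mathscr H,\ \|x\|=1\}$. Powers are componentwise: $\mathbf{T}^n=(T_1^n,\dots,T_d^n)$. *)

theory Defs
  imports "HOL-Analysis.Analysis"
begin

class complex_vector = real_normed_vector +
  fixes scaleC :: "complex \<Rightarrow> 'a \<Rightarrow> 'a" (infixr \<open>*\<^sub>C\<close> 75)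
  assumes scaleC_add_right: "a *\<^sub>C (x + y) = a *\<^sub>C x + a *\<^sub>C y"
    and scaleC_add_left: "(a + b) *\<^sub>C x = a *\<^sub>C x + b *\<^sub>C x"
    and scaleC_scaleC: "a *\<^sub>C (b *\<^sub>C x) = (a * b) *\<^sub>C x"
    and scaleC_one: "1 *\<^sub>C x = x"
    and scaleR_scaleC: "scaleR r x = complex_of_real r *\<^sub>C x"

class complex_inner = complex_vector +
  fixes cinner :: "'a \<Rightarrow> 'a \<Rightarrow> complex"
  assumes cinner_commute: "cinner x y = cnj (cinner y x)"
    and cinner_add_left: "cinner (x + y) z = cinner x z + cinner y z"
    and cinner_scaleC_left: "cinner (r *\<^sub>C x) y = cnj r * cinner x y"
    and cinner_ge_zero: "Im (cinner x x) = 0 \<and> 0 \<le> Re (cinner x x)"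
    and cinner_eq_zero_iff: "cinner x x = 0 \<longleftrightarrow> x = 0"
    and norm_eq_sqrt_cinner: "norm x = sqrt (Re (cinner x x))"

class complex_hilbert = complex_inner + complete_space

definition bounded_clinear_op :: "('a::complex_inner \<Rightarrow> 'a) \<Rightarrow> bool" where
  "bounded_clinear_op T \<longleftrightarrow>
     (\<forall>x y. T (x + y) = T x + T y) \<and>
     (\<forall>c x. T (c *\<^sub>C x) = c *\<^sub>C T x) \<and>
     (\<exists>K. \<forall>x. norm (T x) \<le> K * norm x)"

definition euclid_op_radius :: "nat \<Rightarrow> (nat \<Rightarrow> 'a::complex_inner \<Rightarrow> 'a) \<Rightarrow> real" where
  "euclid_op_radius d T =
     Sup {sqrt (\<Sum>k<d. (cmod (cinner (T k x) x))\<^sup>2) | x. norm x = 1}"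

end

theory Submission
  imports Defs
begin

text \<open>Each component satisfies the power inequality
  $|\langle T_k^2x,x\rangle| \le w(T_k)^2 \le w_e^2(\mathbf T)$ for unit $x$, hence
  $w_e(\mathbf T^2) \le \sqrt d\, w_e^2(\mathbf T) \le d\, w_e^2(\mathbf T)$.
  The power inequality is Pearcy's argument: if $|\mathrm{Re}\langle Su,u\rangle| \le \|u\|^2$
  for all $u$, then applying this to $u = x + Sx$ and $u = x - Sx$ and adding gives
  $\mathrm{Re}\langle S^2x,x\rangle \le \|x\|^2$; rotating $T$ by a unimodular scalar and
  rescaling it turns this into the bound on $|\langle T^2x,x\rangle|$.\<close>

definition clinear :: "('a::complex_vector \<Rightarrow> 'b::complex_vector) \<Rightarrow> bool" where
  "clinear T \<longleftrightarrow> Modules.additive T \<and> (\<forall>c x. T (c *\<^sub>C x) = c *\<^sub>C T x)"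

lemma clinear_scaleC_left:
  assumes "clinear T"
  shows "clinear (\<lambda>u. c *\<^sub>C T u)"
proof -
  have "T (a *\<^sub>C x) = a *\<^sub>C T x" "T (x + y) = T x + T y" for a x y
    using assms by (auto simp: clinear_def Modules.additive_def)
  then show ?thesis
    by (simp add: clinear_def Modules.additive_def scaleC_add_right scaleC_scaleC mult.commute)
qed

lemma bounded_clinear_op_clinear: "bounded_clinear_op T \<Longrightarrow> clinear T"
  by (simp add: bounded_clinear_op_def clinear_def Modules.additive_def)

lemma scaleC_minus_one: "(-1) *\<^sub>C x = - (x::'a::complex_vector)"
  using scaleR_scaleC[of "-1" x] by simp

lemma cinner_minus_left: "cinner (- x) y = - cinner (x::'a::complex_inner) y"
  by (simp flip: scaleC_minus_one add: cinner_scaleC_left)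

lemma cinner_diff_left: "cinner (x - y) z = cinner x z - cinner (y::'a::complex_inner) z"
  using cinner_add_left[of x "- y" z] by (simp add: cinner_minus_left)

lemma cinner_scaleC_right: "cinner x (r *\<^sub>C y) = r * cinner (x::'a::complex_inner) y"
  by (subst cinner_commute) (simp add: cinner_scaleC_left cinner_commute[of y x])

lemma Re_cinner_commute: "Re (cinner x y) = Re (cinner y (x::'a::complex_inner))"
  by (subst cinner_commute) simp

lemma Re_cinner_self: "Re (cinner x x) = (norm (x::'a::complex_inner))\<^sup>2"
  using cinner_ge_zero[of x] norm_eq_sqrt_cinner[of x] by simp

lemma cmod_cinner_le_half_sum_norm_power2:
  "cmod (cinner y x) \<le> ((norm y)\<^sup>2 + (norm (x::'a::complex_inner))\<^sup>2) / 2"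
proof (cases "cinner y x = 0")
  case False
  define c where "c = cinner y x"
  define b where "b = c / complex_of_real (cmod c)"
  have c: "cmod c > 0" using False by (simp add: c_def)
  have "cnj b * c = (c * cnj c) / complex_of_real (cmod c)"
    by (simp add: b_def mult.commute)
  also have "\<dots> = complex_of_real ((cmod c)\<^sup>2 / cmod c)"
    by (simp add: complex_norm_square[symmetric])
  finally have bc: "cnj b * c = complex_of_real (cmod c)"
    using c by (simp add: power2_eq_square)
  have bb: "cnj b * b = 1"
    using c by (simp add: b_def complex_norm_square[symmetric] field_simps power2_eq_square)
  define v where "v = b *\<^sub>C y"
  have "cinner v v = cinner y y"
    using bb by (simp add: v_def cinner_scaleC_left cinner_scaleC_right mult.assoc mult.commute)
  then have nv: "(norm v)\<^sup>2 = (norm y)\<^sup>2"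
    by (simp flip: Re_cinner_self)
  have rv: "Re (cinner v x) = cmod c"
    by (simp add: v_def cinner_scaleC_left c_def[symmetric] bc)
  have "0 \<le> (norm (v - x))\<^sup>2" by simp
  also have "(norm (v - x))\<^sup>2 = (norm v)\<^sup>2 + (norm x)\<^sup>2 - 2 * Re (cinner v x)"
    unfolding Re_cinner_self[symmetric] cinner_diff_left
    by (simp add: Re_cinner_commute[of _ "v - x"] cinner_diff_left Re_cinner_commute[of x v])
  finally show ?thesis using nv rv by (simp add: c_def)
qed simp

lemma Re_cinner_square_le_norm_power2:
  fixes S :: "'a::complex_inner \<Rightarrow> 'a"
  assumes "Modules.additive S"
    and S: "\<And>u. \<bar>Re (cinner (S u) u)\<bar> \<le> (norm u)\<^sup>2"
  shows "Re (cinner (S (S x)) x) \<le> (norm x)\<^sup>2"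
proof -
  interpret Modules.additive S by fact
  define w where "w = x - S (S x)"
  have nonneg: "0 \<le> Re (cinner (u - S u) u)" "0 \<le> Re (cinner (u + S u) u)" for u
    using S[of u] by (simp_all add: cinner_add_left cinner_diff_left Re_cinner_self)
  have "(x + S x) - S (x + S x) = w" "(x - S x) + S (x - S x) = w"
    by (simp_all add: w_def add diff)
  then have "0 \<le> Re (cinner w (x + S x))" "0 \<le> Re (cinner w (x - S x))"
    using nonneg(1)[of "x + S x"] nonneg(2)[of "x - S x"] by (simp_all only:)
  moreover have "Re (cinner w (x + S x)) + Re (cinner w (x - S x)) = 2 * Re (cinner w x)"
    by (simp add: Re_cinner_commute[of w] cinner_add_left cinner_diff_left)
  ultimately have "0 \<le> Re (cinner w x)" by simp
  then show ?thesis
    by (simp add: w_def cinner_diff_left Re_cinner_self)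
qed

lemma cmod_cinner_square_le_norm_power2:
  fixes T :: "'a::complex_inner \<Rightarrow> 'a"
  assumes "clinear T"
    and T: "\<And>u. cmod (cinner (T u) u) \<le> (norm u)\<^sup>2"
  shows "cmod (cinner (T (T x)) x) \<le> (norm x)\<^sup>2"
proof (cases "cinner (T (T x)) x = 0")
  case False
  define a where "a = cinner (T (T x)) x"
  have a: "cmod a > 0" using False by (simp add: a_def)
  define g where "g = csqrt (a / complex_of_real (cmod a))"
  have g: "cmod g = 1"
    using a by (simp add: g_def norm_divide)
  have gga: "cnj (g * g) * a = complex_of_real (cmod a)"
  proof -
    have "cnj (g * g) * a = (a * cnj a) / complex_of_real (cmod a)"
      by (simp add: g_def power2_eq_square[symmetric] mult.commute)
    also have "\<dots> = complex_of_real ((cmod a)\<^sup>2 / cmod a)"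
      by (simp add: complex_norm_square[symmetric])
    finally show ?thesis using a by (simp add: power2_eq_square)
  qed
  define S where "S u = g *\<^sub>C T u" for u
  have "clinear S"
    unfolding S_def using assms(1) by (rule clinear_scaleC_left)
  then have "Modules.additive S"
    by (simp add: clinear_def)
  moreover have "\<bar>Re (cinner (S u) u)\<bar> \<le> (norm u)\<^sup>2" for u
    using abs_Re_le_cmod[of "cinner (S u) u"] T[of u]
    by (simp add: S_def cinner_scaleC_left norm_mult g)
  ultimately have "Re (cinner (S (S x)) x) \<le> (norm x)\<^sup>2"
    by (rule Re_cinner_square_le_norm_power2)
  moreover have "cinner (S (S x)) x = cnj (g * g) * a"
    using assms(1) unfolding a_def by (simp add: S_def clinear_def scaleC_scaleC cinner_scaleC_left)
  ultimately show ?thesis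
    using gga by (metis Re_complex_of_real a_def)
qed simp

lemma cmod_cinner_square_le_rescaled:
  fixes T :: "'a::complex_inner \<Rightarrow> 'a"
  assumes "clinear T"
    and T: "\<And>u. cmod (cinner (T u) u) \<le> W * (norm u)\<^sup>2"
    and "W \<le> s" "0 < s"
  shows "cmod (cinner (T (T x)) x) \<le> s\<^sup>2 * (norm x)\<^sup>2"
proof -
  define S where "S u = complex_of_real (1 / s) *\<^sub>C T u" for u
  have "clinear S"
    unfolding S_def using assms(1) by (rule clinear_scaleC_left)
  moreover have "cmod (cinner (S u) u) \<le> (norm u)\<^sup>2" for u
  proof -
    have "cmod (cinner (S u) u) = cmod (cinner (T u) u) / s"
      using \<open>0 < s\<close> by (simp add: S_def cinner_scaleC_left norm_divide)
    also have "\<dots> \<le> W * (norm u)\<^sup>2 / s"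
      using T \<open>0 < s\<close> by (simp add: divide_right_mono)
    also have "\<dots> \<le> (norm u)\<^sup>2"
      using mult_right_mono[of W s "(norm u)\<^sup>2"] \<open>W \<le> s\<close> \<open>0 < s\<close>
      by (simp add: pos_divide_le_eq mult.commute)
    finally show ?thesis .
  qed
  ultimately have "cmod (cinner (S (S x)) x) \<le> (norm x)\<^sup>2"
    by (rule cmod_cinner_square_le_norm_power2)
  moreover have "cinner (S (S x)) x = complex_of_real (1 / s\<^sup>2) * cinner (T (T x)) x"
    using assms(1) by (simp add: S_def clinear_def scaleC_scaleC cinner_scaleC_left power2_eq_square)
  ultimately show ?thesis
    using \<open>0 < s\<close> by (simp add: norm_divide norm_power pos_divide_le_eq mult.commute)
qed

lemma cmod_cinner_square_le:
  fixes T :: "'a::complex_inner \<Rightarrow> 'a"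
  assumes "clinear T"
    and T: "\<And>u. cmod (cinner (T u) u) \<le> W * (norm u)\<^sup>2"
  shows "cmod (cinner (T (T x)) x) \<le> W\<^sup>2 * (norm x)\<^sup>2"
proof (cases "x = 0")
  case False
  have "0 \<le> W * (norm x)\<^sup>2"
    using T[of x] norm_ge_zero order_trans by blast
  then have "0 \<le> W"
    using False by (simp add: zero_le_mult_iff)
  have "sqrt (cmod (cinner (T (T x)) x)) \<le> W * norm x"
  proof (rule dense_ge)
    fix r assume r: "W * norm x < r"
    define s where "s = r / norm x"
    have "W < s"
      using r False by (simp add: s_def pos_less_divide_eq)
    then have "cmod (cinner (T (T x)) x) \<le> (s * norm x)\<^sup>2"
      using cmod_cinner_square_le_rescaled[OF assms, of s x] \<open>0 \<le> W\<close>
      by (simp add: power_mult_distrib)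
    also have "s * norm x = r"
      using False by (simp add: s_def)
    finally show "sqrt (cmod (cinner (T (T x)) x)) \<le> r"
      using r \<open>0 \<le> W\<close> mult_nonneg_nonneg[OF \<open>0 \<le> W\<close> norm_ge_zero, of x]
      by (intro real_le_lsqrt) linarith+
  qed
  then show ?thesis
    by (metis power_mult_distrib sqrt_le_D)
qed (use assms(1) in \<open>simp add: clinear_def Modules.additive.zero cinner_eq_zero_iff\<close>)

lemma cmod_cinner_le_of_unit:
  fixes T :: "'a::complex_inner \<Rightarrow> 'a"
  assumes "clinear T"
    and T: "\<And>x. norm x = 1 \<Longrightarrow> cmod (cinner (T x) x) \<le> W"
  shows "cmod (cinner (T u) u) \<le> W * (norm u)\<^sup>2"
proof (cases "u = 0")
  case False
  define r where "r = inverse (norm u)"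
  have "r > 0" using False by (simp add: r_def)
  define x where "x = complex_of_real r *\<^sub>C u"
  have "x = r *\<^sub>R u" by (simp add: x_def scaleR_scaleC)
  then have "norm x = 1" using False by (simp add: r_def)
  moreover have "cinner (T x) x = complex_of_real (r * r) * cinner (T u) u"
    using assms(1) by (simp add: x_def clinear_def cinner_scaleC_left cinner_scaleC_right mult.assoc)
  ultimately have "r * r * cmod (cinner (T u) u) \<le> W"
    using T[of x] \<open>r > 0\<close> by (simp add: norm_mult)
  then show ?thesis
    using False by (simp add: r_def field_simps power2_eq_square)
qed (use assms(1) in \<open>simp add: clinear_def Modules.additive.zero cinner_eq_zero_iff\<close>)

lemma bdd_above_euclid_op_radius:
  fixes T :: "nat \<Rightarrow> 'a::complex_inner \<Rightarrow> 'a"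
  assumes "\<forall>k<d. bounded_clinear_op (T k)"
  shows "bdd_above {sqrt (\<Sum>k<d. (cmod (cinner (T k x) x))\<^sup>2) | x. norm x = 1}"
proof -
  obtain K where K: "\<And>k x. k < d \<Longrightarrow> norm (T k x) \<le> K k * norm x"
    using assms unfolding bounded_clinear_op_def by metis
  have "cmod (cinner (T k x) x) \<le> ((K k)\<^sup>2 + 1) / 2" if "k < d" "norm x = 1" for k x
  proof -
    have "(norm (T k x))\<^sup>2 \<le> (K k)\<^sup>2"
      using K[of k x] that by (simp add: power_mono)
    then show ?thesis
      using cmod_cinner_le_half_sum_norm_power2[of "T k x" x] that(2) by simp
  qed
  then have "sqrt (\<Sum>k<d. (cmod (cinner (T k x) x))\<^sup>2) \<le> sqrt (\<Sum>k<d. (((K k)\<^sup>2 + 1) / 2)\<^sup>2)"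
    if "norm x = 1" for x
    using that by (intro real_sqrt_le_mono sum_mono power_mono) auto
  then show ?thesis
    by (intro bdd_aboveI[where M = "sqrt (\<Sum>k<d. (((K k)\<^sup>2 + 1) / 2)\<^sup>2)"]) blast
qed

lemma cmod_cinner_le_euclid_op_radius:
  fixes T :: "nat \<Rightarrow> 'a::complex_inner \<Rightarrow> 'a"
  assumes "\<forall>k<d. bounded_clinear_op (T k)" "k < d" "norm x = 1"
  shows "cmod (cinner (T k x) x) \<le> euclid_op_radius d T"
proof -
  have "(cmod (cinner (T k x) x))\<^sup>2 \<le> (\<Sum>k<d. (cmod (cinner (T k x) x))\<^sup>2)"
    using assms(2) by (intro member_le_sum) auto
  then have "cmod (cinner (T k x) x) \<le> sqrt (\<Sum>k<d. (cmod (cinner (T k x) x))\<^sup>2)"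
    by (rule real_le_rsqrt)
  also have "\<dots> \<le> euclid_op_radius d T"
    unfolding euclid_op_radius_def
    using assms(3) by (intro cSup_upper bdd_above_euclid_op_radius[OF assms(1)]) auto
  finally show ?thesis .
qed

lemma euclid_op_radius_le:
  fixes T :: "nat \<Rightarrow> 'a::complex_inner \<Rightarrow> 'a"
  assumes "\<exists>x::'a. norm x = 1" "0 \<le> c"
    and T: "\<And>k x. k < d \<Longrightarrow> norm x = 1 \<Longrightarrow> cmod (cinner (T k x) x) \<le> c"
  shows "euclid_op_radius d T \<le> sqrt (real d) * c"
  unfolding euclid_op_radius_def
proof (rule cSup_least)
  show "{sqrt (\<Sum>k<d. (cmod (cinner (T k x) x))\<^sup>2) | x. norm x = 1} \<noteq> {}"
    using assms(1) by blast
next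
  fix y assume "y \<in> {sqrt (\<Sum>k<d. (cmod (cinner (T k x) x))\<^sup>2) | x. norm x = 1}"
  then obtain x where x: "norm x = 1" and y: "y = sqrt (\<Sum>k<d. (cmod (cinner (T k x) x))\<^sup>2)"
    by blast
  have "(\<Sum>k<d. (cmod (cinner (T k x) x))\<^sup>2) \<le> (\<Sum>k<d. c\<^sup>2)"
    using T x by (intro sum_mono power_mono) auto
  then have "y \<le> sqrt (real d * c\<^sup>2)" by (simp add: y real_sqrt_le_mono)
  also have "\<dots> = sqrt (real d) * c" using \<open>0 \<le> c\<close> by (simp add: real_sqrt_mult)
  finally show "y \<le> sqrt (real d) * c" .
qed

theorem corollary2p3:
  fixes d :: nat and T :: "nat \<Rightarrow> 'a::complex_hilbert \<Rightarrow> 'a"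
  assumes "d \<ge> 1"
    and "\<exists>x::'a. x \<noteq> 0"
    and "\<forall>k<d. bounded_clinear_op (T k)"
  shows "(1 / real d) * euclid_op_radius d (\<lambda>k. T k \<circ> T k) \<le> (euclid_op_radius d T)\<^sup>2"
proof -
  define W where "W = euclid_op_radius d T"
  obtain x0 :: 'a where "x0 \<noteq> 0" using assms(2) by blast
  then have unit: "\<exists>x::'a. norm x = 1"
    by (intro exI[of _ "inverse (norm x0) *\<^sub>R x0"]) simp
  have square: "cmod (cinner (T k (T k x)) x) \<le> W\<^sup>2 * (norm x)\<^sup>2" if "k < d" for k x
  proof -
    have "clinear (T k)"
      using assms(3) that by (simp add: bounded_clinear_op_clinear)
    moreover have "cmod (cinner (T k u) u) \<le> W * (norm u)\<^sup>2" for u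
      using \<open>clinear (T k)\<close> cmod_cinner_le_euclid_op_radius[OF assms(3) that]
      unfolding W_def by (rule cmod_cinner_le_of_unit)
    ultimately show ?thesis
      by (rule cmod_cinner_square_le)
  qed
  have "euclid_op_radius d (\<lambda>k. T k \<circ> T k) \<le> sqrt (real d) * W\<^sup>2"
  proof (rule euclid_op_radius_le[OF unit])
    fix k and x :: 'a
    assume "k < d" "norm x = 1"
    then show "cmod (cinner ((T k \<circ> T k) x) x) \<le> W\<^sup>2"
      using square[of k x] by simp
  qed simp
  also have "\<dots> \<le> real d * W\<^sup>2"
    using assms(1) by (intro mult_right_mono) (simp_all add: real_sqrt_le_iff' power2_eq_square)
  finally show ?thesis
    using assms(1) by (simp add: W_def field_simps)
qed

end
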